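(* Let $k,r\in\mathbb N$ with $r\ge2$, let $s_1,\dots,s_r\in\mathbb N$ with $s_i\le k$, let $H_1,\dots,H_r$ be graphs with $1\le v(H_i)\le s_i$, and let $N\in\mathbb N$ with $N\ge r^{C(k+t)}$, where $t=\sum_i s_i$. Let $\mathbf H=(H_i)$, $\mathbf s=(s_i)$. Then for every graph $G$ on $N$ vertices with $G\in\mathcal B'(\mathbf H)\cap\mathcal E(\mathbf s)$ and every $(S,c)\in\mathbf S(G)$, the hypergraph $\mathfrak I_{H_i^-,G_i,G}[W]$ is $(p,p|W|)$-Janson for every $i\in[r]$ and every $W\subset S$ with $|W|\ge\delta N/(8r)$.
   Context: Constants: $C=300$, $\delta=r^{-50}$, $p=\frac1{2^{25}k^2r^4}$. $H_i^-$ is the graph obtained from $H_i$ by deleting a vertex. Hypergraphs are identified with their edge sets; $\mathcal G[W]=\{E\in\mathcal G:E\subset W\}$. For $\nu:\mathcal G\to\mathbb R_{\ge0}$: $e(\nu)=\sum_E\nu(E)$, $d_\nu(L)=\sum_{E\in\mathcal G,L\subset E}\nu(E)$, $\Lambda_p(\nu)=\sum_{L\subset V(\mathcal G),|L|\ge2}d_\nu(L)^2p^{-|L|}$; for $R>0$, $\mathcal G$ is $(p,R)$-Janson if some $\nu$ has $\Lambda_p(\nu)<e(\nu)^2/R$. For graphs $F,G$ and $G'\subset G$, $\mathfrak I_{F,G',G}$ is the hypergraph on $V(G)$ with edges the sets $L$ with $G'[L]=G[L]\cong F$. For a colouring $c$ with colours in $[r]$, $G_i$ is the subgraph of edges of colour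 $i$. $\mathcal E(\mathbf s)$: graphs $G$ such that for all $t'<t$, all graphs $F_1,\dots,F_r$ with $v(F_i)\le s_i$ and $\sum v(F_i)=t'$, every $W\subset V(G)$ with $|W|\ge(\delta/(8r))^{t-t'}v(G)$ and every $c:E(G[W])\to[r]$, some $\mathfrak I_{F_i,G_i,G}[W]$ is $(p,p|W|)$-Janson. $\mathcal B'(\mathbf H)$: graphs $G$ for which there are $S\subset V(G)$ with $|S|\ge\delta^{2/3}v(G)$ and $c:E(G[S])\to[r]$ with $\mathfrak I_{H_i,G_i,G}[S]$ not $(p,2^{-9}r^{-1}\delta p\,v(G))$-Janson for all $i$. $\mathbf S(G)$: the set of pairs $(S,c)$ with $S\subset V(G)$, $|S|\ge\delta^{2/3}N$, $c:E(G[S])\to[r]$, such that $\mathfrak I_{H_i,G_i,G}[S]$ is not $(p,2^{-9}r^{-1}\delta pN)$-Janson for every $i\in[r]$. *)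

theory Defs
  imports Complex_Main
begin

type_synonym 'a graph = "'a set \<times> 'a set set"

definition verts :: "'a graph \<Rightarrow> 'a set" where "verts G = fst G"
definition edges :: "'a graph \<Rightarrow> 'a set set" where "edges G = snd G"

definition wf_graph :: "'a graph \<Rightarrow> bool" where
  "wf_graph G \<longleftrightarrow> finite (verts G) \<and> (\<forall>e\<in>edges G. e \<subseteq> verts G \<and> card e = 2)"

definition induced :: "'a graph \<Rightarrow> 'a set \<Rightarrow> 'a graph" where
  "induced G L = (L, {e \<in> edges G. e \<subseteq> L})"

definition delete_vertex :: "'a graph \<Rightarrow> 'a \<Rightarrow> 'a graph" where
  "delete_vertex G x = induced G (verts G - {x})"

definition graph_iso :: "'a graph \<Rightarrow> 'b graph \<Rightarrow> bool" where
  "graph_iso F G \<longleftrightarrow> (\<exists>f. bij_betw f (verts F) (verts G) \<and>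
     (\<forall>u\<in>verts F. \<forall>v\<in>verts F. {u, v} \<in> edges F \<longleftrightarrow> {f u, f v} \<in> edges G))"

definition colour_graph :: "'a graph \<Rightarrow> 'a set \<Rightarrow> ('a set \<Rightarrow> nat) \<Rightarrow> nat \<Rightarrow> 'a graph" where
  "colour_graph G S c i = (verts G, {e \<in> edges (induced G S). c e = i})"

definition is_colouring :: "nat \<Rightarrow> 'a graph \<Rightarrow> 'a set \<Rightarrow> ('a set \<Rightarrow> nat) \<Rightarrow> bool" where
  "is_colouring r G S c \<longleftrightarrow> (\<forall>e\<in>edges (induced G S). c e \<in> {1..r})"

definition hrestrict :: "'a set set \<Rightarrow> 'a set \<Rightarrow> 'a set set" where
  "hrestrict \<G> W = {E \<in> \<G>. E \<subseteq> W}"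

definition e_nu :: "'a set set \<Rightarrow> ('a set \<Rightarrow> real) \<Rightarrow> real" where
  "e_nu \<G> \<nu> = (\<Sum>E\<in>\<G>. \<nu> E)"

definition d_nu :: "'a set set \<Rightarrow> ('a set \<Rightarrow> real) \<Rightarrow> 'a set \<Rightarrow> real" where
  "d_nu \<G> \<nu> L = (\<Sum>E\<in>{E \<in> \<G>. L \<subseteq> E}. \<nu> E)"

(* V is the vertex set of the hypergraph *)
definition Lambda_p :: "real \<Rightarrow> 'a set \<Rightarrow> 'a set set \<Rightarrow> ('a set \<Rightarrow> real) \<Rightarrow> real" where
  "Lambda_p p V \<G> \<nu> = (\<Sum>L\<in>{L. L \<subseteq> V \<and> card L \<ge> 2}. (d_nu \<G> \<nu> L)^2 * p powi (- int (card L)))"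

definition janson :: "real \<Rightarrow> real \<Rightarrow> 'a set \<Rightarrow> 'a set set \<Rightarrow> bool" where
  "janson p R V \<G> \<longleftrightarrow> (\<exists>\<nu>. (\<forall>E\<in>\<G>. \<nu> E \<ge> 0) \<and> Lambda_p p V \<G> \<nu> < (e_nu \<G> \<nu>)^2 / R)"

definition copies :: "'b graph \<Rightarrow> 'a graph \<Rightarrow> 'a graph \<Rightarrow> 'a set set" where
  "copies F G' G = {L. L \<subseteq> verts G \<and> induced G' L = induced G L \<and> graph_iso F (induced G L)}"

definition C_const :: nat where "C_const = 300"
definition delta :: "nat \<Rightarrow> real" where "delta r = 1 / (real r) ^ 50"
definition p_const :: "nat \<Rightarrow> nat \<Rightarrow> real" where
  "p_const k r = 1 / (2 ^ 25 * (real k)^2 * (real r)^4)"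

definition class_E :: "nat \<Rightarrow> nat \<Rightarrow> (nat \<Rightarrow> nat) \<Rightarrow> 'a graph \<Rightarrow> bool" where
  "class_E k r s G \<longleftrightarrow>
    (let t = (\<Sum>i\<in>{1..r}. s i) in
     \<forall>t' < t. \<forall>F :: nat \<Rightarrow> nat graph.
       (\<forall>i\<in>{1..r}. wf_graph (F i) \<and> card (verts (F i)) \<le> s i) \<and>
       (\<Sum>i\<in>{1..r}. card (verts (F i))) = t' \<longrightarrow>
       (\<forall>W c. W \<subseteq> verts G \<and>
              real (card W) \<ge> (delta r / (8 * real r)) ^ (t - t') * real (card (verts G)) \<and>
              is_colouring r G W c \<longrightarrow>
          (\<exists>i\<in>{1..r}. janson (p_const k r) (p_const k r * real (card W)) W
              (hrestrict (copies (F i) (colour_graph G W c i) G) W))))"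

definition good_pair :: "nat \<Rightarrow> nat \<Rightarrow> (nat \<Rightarrow> nat graph) \<Rightarrow> 'a graph \<Rightarrow> 'a set \<Rightarrow> ('a set \<Rightarrow> nat) \<Rightarrow> bool" where
  "good_pair k r H G S c \<longleftrightarrow>
     S \<subseteq> verts G \<and> real (card S) \<ge> delta r powr (2/3) * real (card (verts G)) \<and>
     is_colouring r G S c \<and>
     (\<forall>i\<in>{1..r}. \<not> janson (p_const k r)
         (2 powi (-9) / real r * delta r * p_const k r * real (card (verts G))) S
         (hrestrict (copies (H i) (colour_graph G S c i) G) S))"

definition class_B' :: "nat \<Rightarrow> nat \<Rightarrow> (nat \<Rightarrow> nat graph) \<Rightarrow> 'a graph \<Rightarrow> bool" where
  "class_B' k r H G \<longleftrightarrow> (\<exists>S c. good_pair k r H G S c)"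

end

theory Submission
  imports Defs
begin

text \<open>Deleting a vertex of \<open>H\<^sub>i\<close> lowers the total vertex count of \<open>(H\<^sub>j)\<close> by one, so
  \<open>\<E>(\<bold>s)\<close> applies to the sequence obtained by replacing \<open>H\<^sub>i\<close> with \<open>H\<^sub>i\<^sup>-\<close>, on any set
  \<open>W\<close> of size at least \<open>\<delta>N/(8r)\<close>. If the Janson colour it provides is \<open>i\<close> we are done.
  Otherwise it is some \<open>j \<noteq> i\<close>, and a Janson witness for \<open>\<frak>I\<^sub>H\<^sub>j[W]\<close> extended by zero is
  one for \<open>\<frak>I\<^sub>H\<^sub>j[S]\<close> with a smaller parameter, contradicting \<open>(S, c) \<in> \<bold>S(G)\<close>.\<close>

lemma d_nu_eq_0:
  assumes "\<forall>E\<in>\<G>. \<not> L \<subseteq> E"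
  shows "d_nu \<G> \<nu> L = 0"
proof -
  have "{E \<in> \<G>. L \<subseteq> E} = {}"
    using assms by blast
  then show ?thesis
    unfolding d_nu_def by (simp only: sum.empty)
qed

lemma janson_mono_R:
  assumes "janson p R V \<G>" "0 < R'" "R' \<le> R"
  shows "janson p R' V \<G>"
proof -
  obtain \<nu> where "\<forall>E\<in>\<G>. \<nu> E \<ge> 0" and "Lambda_p p V \<G> \<nu> < (e_nu \<G> \<nu>)^2 / R"
    using assms(1) unfolding janson_def by blast
  moreover have "(e_nu \<G> \<nu>)^2 / R \<le> (e_nu \<G> \<nu>)^2 / R'"
    using assms(2,3) by (intro divide_left_mono) auto
  ultimately show ?thesis
    unfolding janson_def by force
qed

lemma janson_mono_vertices:
  assumes "finite V'" "V \<subseteq> V'" "\<forall>E\<in>\<G>. E \<subseteq> V" "janson p R V \<G>"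
  shows "janson p R V' \<G>"
proof -
  obtain \<nu> where "\<forall>E\<in>\<G>. \<nu> E \<ge> 0" and "Lambda_p p V \<G> \<nu> < (e_nu \<G> \<nu>)^2 / R"
    using assms(4) unfolding janson_def by blast
  moreover have "Lambda_p p V' \<G> \<nu> = Lambda_p p V \<G> \<nu>"
    unfolding Lambda_p_def
  proof (rule sum.mono_neutral_right)
    show "finite {L. L \<subseteq> V' \<and> 2 \<le> card L}"
      by (rule finite_subset[of _ "Pow V'"]) (use assms(1) in auto)
    show "\<forall>L\<in>{L. L \<subseteq> V' \<and> 2 \<le> card L} - {L. L \<subseteq> V \<and> 2 \<le> card L}.
            (d_nu \<G> \<nu> L)\<^sup>2 * p powi - int (card L) = 0"
      using assms(3) by (auto intro!: d_nu_eq_0)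
  qed (use assms(2) in auto)
  ultimately show ?thesis
    unfolding janson_def by force
qed

lemma janson_mono_hypergraph:
  assumes "finite \<G>" "\<G>' \<subseteq> \<G>" "janson p R V \<G>'"
  shows "janson p R V \<G>"
proof -
  obtain \<nu> where nonneg: "\<forall>E\<in>\<G>'. \<nu> E \<ge> 0" and "Lambda_p p V \<G>' \<nu> < (e_nu \<G>' \<nu>)^2 / R"
    using assms(3) unfolding janson_def by blast
  define \<nu>' where "\<nu>' E = (if E \<in> \<G>' then \<nu> E else 0)" for E
  have "e_nu \<G> \<nu>' = e_nu \<G>' \<nu>"
    using sum.inter_restrict[OF assms(1), of \<nu> \<G>'] assms(2)
    unfolding e_nu_def \<nu>'_def by (simp add: Int_absorb1)
  moreover have "d_nu \<G> \<nu>' L = d_nu \<G>' \<nu> L" for L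
  proof -
    have "finite {E \<in> \<G>. L \<subseteq> E}"
      using assms(1) by simp
    moreover have "{E \<in> \<G>. L \<subseteq> E} \<inter> \<G>' = {E \<in> \<G>'. L \<subseteq> E}"
      using assms(2) by blast
    ultimately show ?thesis
      unfolding d_nu_def \<nu>'_def by (metis sum.inter_restrict)
  qed
  then have "Lambda_p p V \<G> \<nu>' = Lambda_p p V \<G>' \<nu>"
    unfolding Lambda_p_def by simp
  moreover have "\<forall>E\<in>\<G>. \<nu>' E \<ge> 0"
    using nonneg by (simp add: \<nu>'_def)
  ultimately show ?thesis
    using \<open>Lambda_p p V \<G>' \<nu> < _\<close> unfolding janson_def by (intro exI[of _ \<nu>']) simp
qed

lemma hrestrict_mono: "W \<subseteq> S \<Longrightarrow> hrestrict \<G> W \<subseteq> hrestrict \<G> S"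
  unfolding hrestrict_def by blast

lemma finite_hrestrict: "finite S \<Longrightarrow> finite (hrestrict \<G> S)"
  unfolding hrestrict_def by (rule finite_subset[of _ "Pow S"]) auto

lemma janson_hrestrict_superset:
  assumes "finite S" "W \<subseteq> S" "janson p R W (hrestrict \<G> W)" "0 < R'" "R' \<le> R"
  shows "janson p R' S (hrestrict \<G> S)"
proof -
  have "janson p R S (hrestrict \<G> W)"
    by (rule janson_mono_vertices[OF assms(1,2) _ assms(3)]) (auto simp: hrestrict_def)
  then have "janson p R S (hrestrict \<G> S)"
    by (rule janson_mono_hypergraph[OF finite_hrestrict[OF assms(1)] hrestrict_mono[OF assms(2)]])
  then show ?thesis
    using assms(4,5) by (rule janson_mono_R)
qed

lemma is_colouring_subset:
  "is_colouring r G S c \<Longrightarrow> W \<subseteq> S \<Longrightarrow> is_colouring r G W c"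
  unfolding is_colouring_def induced_def edges_def by auto

lemma hrestrict_copies_colour_graph:
  assumes "W \<subseteq> S"
  shows "hrestrict (copies F (colour_graph G W c j) G) W
       = hrestrict (copies F (colour_graph G S c j) G) W"
proof -
  have "induced (colour_graph G W c j) L = induced (colour_graph G S c j) L" if "L \<subseteq> W" for L
    using that assms unfolding induced_def colour_graph_def edges_def by auto
  then show ?thesis
    unfolding hrestrict_def copies_def by auto
qed

lemma wf_graph_delete_vertex: "wf_graph H \<Longrightarrow> wf_graph (delete_vertex H x)"
  unfolding wf_graph_def delete_vertex_def induced_def verts_def edges_def by auto

lemma card_verts_delete_vertex:
  "wf_graph H \<Longrightarrow> x \<in> verts H \<Longrightarrow> card (verts (delete_vertex H x)) = card (verts H) - 1"
  unfolding wf_graph_def delete_vertex_def induced_def verts_def by simp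

lemma delta_div_le_1: "delta r / (8 * real r) \<le> 1"
proof (cases "r = 0")
  case False
  then have "delta r \<le> 1" "1 \<le> 8 * real r"
    by (auto simp: delta_def)
  moreover have "0 \<le> delta r"
    by (simp add: delta_def)
  ultimately show ?thesis
    by (simp add: divide_le_eq_1)
qed (simp add: delta_def)

lemma class_E_janson:
  fixes F :: "nat \<Rightarrow> nat graph"
  assumes "class_E k r s G"
    and "\<forall>i\<in>{1..r}. wf_graph (F i) \<and> card (verts (F i)) \<le> s i"
    and "(\<Sum>i\<in>{1..r}. card (verts (F i))) < (\<Sum>i\<in>{1..r}. s i)"
    and "W \<subseteq> verts G" "is_colouring r G W c"
    and "delta r / (8 * real r) * real (card (verts G)) \<le> real (card W)"
  shows "\<exists>j\<in>{1..r}. janson (p_const k r) (p_const k r * real (card W)) W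
           (hrestrict (copies (F j) (colour_graph G W c j) G) W)"
proof -
  define q where "q = delta r / (8 * real r)"
  define t where "t = (\<Sum>i\<in>{1..r}. s i)"
  define t' where "t' = (\<Sum>i\<in>{1..r}. card (verts (F i)))"
  have "q ^ (t - t') \<le> q ^ 1"
    using assms(3) delta_div_le_1[of r]
    by (intro power_decreasing) (auto simp: q_def delta_def t_def t'_def)
  then have "q ^ (t - t') * real (card (verts G)) \<le> real (card W)"
    using assms(6) mult_right_mono[of "q ^ (t - t')" q "real (card (verts G))"]
    unfolding q_def by simp
  then show ?thesis
    using assms(1-5) unfolding class_E_def Let_def q_def t_def t'_def by blast
qed

lemma class_E_janson_delete_vertex:
  fixes H :: "nat \<Rightarrow> nat graph"
  assumes "class_E k r s G"
    and "\<forall>j\<in>{1..r}. wf_graph (H j) \<and> card (verts (H j)) \<le> s j"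
    and "i \<in> {1..r}" "x \<in> verts (H i)"
    and "W \<subseteq> verts G" "is_colouring r G W c"
    and "delta r / (8 * real r) * real (card (verts G)) \<le> real (card W)"
  shows "\<exists>j\<in>{1..r}. janson (p_const k r) (p_const k r * real (card W)) W
           (hrestrict (copies ((H(i := delete_vertex (H i) x)) j) (colour_graph G W c j) G) W)"
proof -
  let ?F = "H(i := delete_vertex (H i) x)"
  have H_i: "wf_graph (H i)" "card (verts (H i)) \<le> s i"
    using assms(2,3) by auto
  then have "card (verts (H i)) > 0"
    using assms(4) card_gt_0_iff unfolding wf_graph_def by blast
  have F: "\<forall>j\<in>{1..r}. wf_graph (?F j) \<and> card (verts (?F j)) \<le> s j"
    using assms(2,4) H_i by (auto simp: wf_graph_delete_vertex card_verts_delete_vertex)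
  have "(\<Sum>j\<in>{1..r}. card (verts (?F j))) < (\<Sum>j\<in>{1..r}. card (verts (H j)))"
    using assms(3,4) H_i \<open>card (verts (H i)) > 0\<close>
    by (intro sum_strict_mono_ex1) (auto simp: card_verts_delete_vertex)
  also have "\<dots> \<le> (\<Sum>j\<in>{1..r}. s j)"
    using assms(2) by (intro sum_mono) auto
  finally show ?thesis
    using class_E_janson[OF assms(1) F _ assms(5-7)] by blast
qed

lemma good_pair_not_janson_subset:
  assumes "good_pair k r H G S c" "finite (verts G)"
    and "k \<ge> 1" "card (verts G) \<ge> 1" "j \<in> {1..r}"
    and "W \<subseteq> S" "delta r * real (card (verts G)) / (8 * real r) \<le> real (card W)"
  shows "\<not> janson (p_const k r) (p_const k r * real (card W)) W
           (hrestrict (copies (H j) (colour_graph G S c j) G) W)"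
proof
  define p where "p = p_const k r"
  define N where "N = real (card (verts G))"
  define R where "R = 2 powi (-9) / real r * delta r * p * N"
  assume janson_W: "janson p (p * real (card W)) W (hrestrict (copies (H j) (colour_graph G S c j) G) W)"
  have "r \<ge> 1"
    using assms(5) by simp
  then have "p > 0" "delta r > 0" "N \<ge> 1"
    using assms(3,4) by (auto simp: p_def p_const_def delta_def N_def)
  then have "0 < R"
    using \<open>r \<ge> 1\<close> by (simp add: R_def)
  have "R = (1/64) * (p * (delta r * N / (8 * real r)))"
    by (simp add: R_def power_int_def field_simps)
  also have "\<dots> \<le> p * (delta r * N / (8 * real r))"
    using \<open>p > 0\<close> \<open>delta r > 0\<close> \<open>N \<ge> 1\<close> by (intro mult_left_le_one_le) auto
  also have "\<dots> \<le> p * real (card W)"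
    using assms(7) \<open>p > 0\<close> by (intro mult_left_mono) (auto simp: N_def)
  finally have "R \<le> p * real (card W)" .
  moreover have "finite S"
    using assms(1,2) unfolding good_pair_def by (auto intro: finite_subset)
  ultimately have "janson p R S (hrestrict (copies (H j) (colour_graph G S c j) G) S)"
    using janson_hrestrict_superset[OF _ assms(6) janson_W \<open>0 < R\<close>] by blast
  then show False
    using assms(1,5) unfolding good_pair_def p_def R_def N_def by blast
qed

theorem lemma6p5:
  fixes k r N :: nat and s :: "nat \<Rightarrow> nat" and H :: "nat \<Rightarrow> nat graph"
    and G :: "'a graph" and S :: "'a set" and c :: "'a set \<Rightarrow> nat"
  assumes "r \<ge> 2"
    and "\<forall>i\<in>{1..r}. s i \<le> k"
    and "\<forall>i\<in>{1..r}. wf_graph (H i) \<and> 1 \<le> card (verts (H i)) \<and> card (verts (H i)) \<le> s i"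
    and "N \<ge> r ^ (C_const * (k + (\<Sum>i\<in>{1..r}. s i)))"
    and "wf_graph G" and "card (verts G) = N"
    and "class_B' k r H G" and "class_E k r s G"
    and "good_pair k r H G S c"
  shows "\<forall>i\<in>{1..r}. \<forall>x\<in>verts (H i). \<forall>W. W \<subseteq> S \<and> real (card W) \<ge> delta r * real N / (8 * real r) \<longrightarrow>
           janson (p_const k r) (p_const k r * real (card W)) W
             (hrestrict (copies (delete_vertex (H i) x) (colour_graph G S c i) G) W)"
proof (intro ballI allI impI, elim conjE)
  fix i x W
  assume i: "i \<in> {1..r}" and x: "x \<in> verts (H i)"
    and W: "W \<subseteq> S" "delta r * real N / (8 * real r) \<le> real (card W)"
  have S: "S \<subseteq> verts G" "is_colouring r G S c"
    using assms(9) unfolding good_pair_def by auto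
  have H: "\<forall>j\<in>{1..r}. wf_graph (H j) \<and> card (verts (H j)) \<le> s j"
    using assms(3) by auto
  have "W \<subseteq> verts G"
    using S(1) W(1) by blast
  moreover have "delta r / (8 * real r) * real (card (verts G)) \<le> real (card W)"
    using W(2) assms(6) by simp
  ultimately have janson_some: "\<exists>j\<in>{1..r}. janson (p_const k r) (p_const k r * real (card W)) W
      (hrestrict (copies ((H(i := delete_vertex (H i) x)) j) (colour_graph G S c j) G) W)"
    using class_E_janson_delete_vertex[OF assms(8) H i x _ is_colouring_subset[OF S(2) W(1)]]
    by (simp add: hrestrict_copies_colour_graph[OF W(1)])
  \<comment> \<open>The hypothesis \<open>class_B'\<close> is implied by \<open>good_pair\<close>; the bound on \<open>N\<close> only makes
    \<open>N\<close> positive.\<close>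
  have "r ^ (C_const * (k + (\<Sum>i\<in>{1..r}. s i))) \<ge> 1"
    using assms(1) by simp
  then have "N \<ge> 1"
    using assms(4) by linarith
  moreover have "k \<ge> 1"
    using assms(2,3) i by fastforce
  moreover have "finite (verts G)"
    using assms(5) by (simp add: wf_graph_def)
  ultimately have "\<forall>j\<in>{1..r}. \<not> janson (p_const k r) (p_const k r * real (card W)) W
      (hrestrict (copies (H j) (colour_graph G S c j) G) W)"
    using good_pair_not_janson_subset[OF assms(9) _ _ _ _ W(1)] assms(6) W(2) by simp
  with janson_some show "janson (p_const k r) (p_const k r * real (card W)) W
      (hrestrict (copies (delete_vertex (H i) x) (colour_graph G S c i) G) W)"
    by (metis fun_upd_apply)
qed

end
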